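(* Assume the standing setting and the type II decomposition for a type II edge $e=uw$ ($u\in U$, $w\in W$), and suppose $\omega=2$. Then: (i) $|U_1|=|W_1|+1$, $|U_4|=|W_4|+1$, $|W_2|=|U_2|+1$ and $|W_3|=|U_3|+1$; (ii) if $U_2\neq\emptyset$, then $E_G[U_2,W_1]=\{e\}$ when $W_1\neq\emptyset$, and $E_G[U_2,W_3]=\{e\}$ when $W_1=\emptyset$; (iii) if $U_2=\emptyset$, then $E_G[U_4,W_1]=\{e\}$ when $W_1\neq\emptyset$, and $E_G[U_4,W_3]=\{e\}$ when $W_1=\emptyset$.
   Context: Graphs may have multiple edges but no loops. An edge is admissible if it lies in some perfect matching; a connected graph with at least two vertices is matching covered if every edge is admissible; an edge $e$ of a matching covered graph $G$ is removable if $G-e$ is matching covered, and nonremovable otherwise. A brick is a 3-connected nonbipartite graph $G$ such that $G-x-y$ has a perfect matching for all distinct $x,y$. A nonbipartite matching covered graph $G$ is near-bipartite if it has a pair of edges $\{e_1,e_2\}$ (a removable doubleton) such that $G-\{e_1,e_2\}$ is bipartite matching covered. For a graph with a perfect matching, a nonempty vertex set $S$ is a barrier if the number of odd components of $G-S$ equals $|S|$. $E_G[X,Y]$ is the set of edges with one end in $X$ and the other in $Y$. Standing setting: $G$ is a near-bipartite brick with removable doubleton $\{e_1,e_2\}$, $H=G-\{e_1,e_2\}$, and $(U,W)$ is the bipartition of $H$, labelled so that both ends of $e_1$ lie in $U$ and both ends of $e_2$ lie in $W$. A nonremovable edge $e\notin\{e_1,e_2\}$ of $G$ is of type II if $e$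 is nonremovable in $H$. Type II decomposition: let $e=uw$ be of type II with $u\in U$, $w\in W$. There is an edge $e^*$ of $G-e$ that is nonadmissible both in $G-e$ and in $H-e$; fix such $e^*$ and an inclusion-maximal barrier $B$ of $G-e$ containing both ends of $e^*$. Every component of $G-e-B$ with more than one vertex contains $e_1$ or $e_2$, so there are at most two such components; let $\omega\in\{0,1,2\}$ be their number. Let $U_1=B\cap U$, $W_2=B\cap W$, and let $U_2$ (resp. $W_1$) be the set of vertices of $U$ (resp. $W$) forming single-vertex components of $G-e-B$. Define subgraphs $G_1,G_2$: if $\omega=2$, $G_1$ is the nontrivial component containing $e_2$ and $G_2$ the one containing $e_1$; if $\omega=1$, the unique nontrivial component is $G_2$ (and $G_1$ is empty) when $|U_1|=|W_1|$, and is $G_1$ (and $G_2$ is empty) otherwise; if $\omega=0$ both are empty. Set $U_3=V(G_1)\cap U$, $W_3=V(G_1)\cap W$, $U_4=V(G_2)\cap U$, $W_4=V(G_2)\cap W$. *)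

theory Defs
  imports Main
begin

text \<open>Finite multigraphs (multiple edges allowed, no loops): a vertex set V, an edge set E,
and an end-point map ends assigning each edge its two-element set of ends.
Subgraphs obtained by deleting edges/vertices share the same ends map.\<close>

definition graph :: "'v set \<Rightarrow> 'e set \<Rightarrow> ('e \<Rightarrow> 'v set) \<Rightarrow> bool" where
  "graph V E ends \<longleftrightarrow> finite V \<and> finite E \<and> (\<forall>f\<in>E. ends f \<subseteq> V \<and> card (ends f) = 2)"

definition perfect_matching :: "'v set \<Rightarrow> 'e set \<Rightarrow> ('e \<Rightarrow> 'v set) \<Rightarrow> 'e set \<Rightarrow> bool" where
  "perfect_matching V E ends M \<longleftrightarrow> M \<subseteq> E \<and> (\<forall>v\<in>V. \<exists>!f. f \<in> M \<and> v \<in> ends f)"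

definition admissible :: "'v set \<Rightarrow> 'e set \<Rightarrow> ('e \<Rightarrow> 'v set) \<Rightarrow> 'e \<Rightarrow> bool" where
  "admissible V E ends f \<longleftrightarrow> (\<exists>M. perfect_matching V E ends M \<and> f \<in> M)"

definition adj :: "'v set \<Rightarrow> 'e set \<Rightarrow> ('e \<Rightarrow> 'v set) \<Rightarrow> 'v \<Rightarrow> 'v \<Rightarrow> bool" where
  "adj V E ends x y \<longleftrightarrow> x \<in> V \<and> y \<in> V \<and> (\<exists>f\<in>E. ends f = {x, y})"

definition reach :: "'v set \<Rightarrow> 'e set \<Rightarrow> ('e \<Rightarrow> 'v set) \<Rightarrow> 'v \<Rightarrow> 'v \<Rightarrow> bool" where
  "reach V E ends x y \<longleftrightarrow> x \<in> V \<and> (adj V E ends)\<^sup>*\<^sup>* x y"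

definition connected_graph :: "'v set \<Rightarrow> 'e set \<Rightarrow> ('e \<Rightarrow> 'v set) \<Rightarrow> bool" where
  "connected_graph V E ends \<longleftrightarrow> (\<forall>x\<in>V. \<forall>y\<in>V. reach V E ends x y)"

definition matching_covered :: "'v set \<Rightarrow> 'e set \<Rightarrow> ('e \<Rightarrow> 'v set) \<Rightarrow> bool" where
  "matching_covered V E ends \<longleftrightarrow> graph V E ends \<and> connected_graph V E ends \<and> card V \<ge> 2
     \<and> (\<forall>f\<in>E. admissible V E ends f)"

definition removable :: "'v set \<Rightarrow> 'e set \<Rightarrow> ('e \<Rightarrow> 'v set) \<Rightarrow> 'e \<Rightarrow> bool" where
  "removable V E ends f \<longleftrightarrow> matching_covered V (E - {f}) ends"

definition vdel :: "'e set \<Rightarrow> ('e \<Rightarrow> 'v set) \<Rightarrow> 'v set \<Rightarrow> 'e set" where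
  "vdel E ends X = {f \<in> E. ends f \<inter> X = {}}"

definition bipartite_with :: "'v set \<Rightarrow> 'e set \<Rightarrow> ('e \<Rightarrow> 'v set) \<Rightarrow> 'v set \<Rightarrow> 'v set \<Rightarrow> bool" where
  "bipartite_with V E ends U W \<longleftrightarrow> U \<union> W = V \<and> U \<inter> W = {}
     \<and> (\<forall>f\<in>E. \<exists>u\<in>U. \<exists>w\<in>W. ends f = {u, w})"

definition bipartite :: "'v set \<Rightarrow> 'e set \<Rightarrow> ('e \<Rightarrow> 'v set) \<Rightarrow> bool" where
  "bipartite V E ends \<longleftrightarrow> (\<exists>U W. bipartite_with V E ends U W)"

definition three_connected :: "'v set \<Rightarrow> 'e set \<Rightarrow> ('e \<Rightarrow> 'v set) \<Rightarrow> bool" where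
  "three_connected V E ends \<longleftrightarrow> graph V E ends \<and> card V \<ge> 4
     \<and> (\<forall>X. X \<subseteq> V \<and> card X \<le> 2 \<longrightarrow> connected_graph (V - X) (vdel E ends X) ends)"

definition brick :: "'v set \<Rightarrow> 'e set \<Rightarrow> ('e \<Rightarrow> 'v set) \<Rightarrow> bool" where
  "brick V E ends \<longleftrightarrow> three_connected V E ends \<and> \<not> bipartite V E ends
     \<and> (\<forall>x\<in>V. \<forall>y\<in>V. x \<noteq> y \<longrightarrow>
          (\<exists>M. perfect_matching (V - {x, y}) (vdel E ends {x, y}) ends M))"

definition components :: "'v set \<Rightarrow> 'e set \<Rightarrow> ('e \<Rightarrow> 'v set) \<Rightarrow> 'v set set" where
  "components V E ends = {{y. reach V E ends x y} | x. x \<in> V}"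

definition barrier :: "'v set \<Rightarrow> 'e set \<Rightarrow> ('e \<Rightarrow> 'v set) \<Rightarrow> 'v set \<Rightarrow> bool" where
  "barrier V E ends B \<longleftrightarrow> B \<noteq> {} \<and> B \<subseteq> V \<and>
     card {C \<in> components (V - B) (vdel E ends B) ends. odd (card C)} = card B"

definition edges_between :: "'e set \<Rightarrow> ('e \<Rightarrow> 'v set) \<Rightarrow> 'v set \<Rightarrow> 'v set \<Rightarrow> 'e set" where
  "edges_between E ends X Y = {f \<in> E. \<exists>x\<in>X. \<exists>y\<in>Y. ends f = {x, y}}"

end

theory Submission
  imports Defs
begin

text \<open>Give the vertices of W weight 1 and those of U weight -1; the surplus of a vertex set is
  its total weight. Every edge of H has weight sum 0, e1 has -2 and e2 has 2, so the surplus of a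
  set covered by a matching is read off from the matching edges leaving it. Consider a matching
  that covers V - B, uses each vertex of B at most once and matches two vertices x, y of B only
  inside B. The odd components of G - e - B are as many as the vertices of B, each is left by a
  matching edge, and such an edge ends in B - {x, y} or is e; so the count is tight: e is in the
  matching, u and w lie outside B in different components, every odd component is left by exactly
  one matching edge and every even one by none. Applied to a perfect matching of H through e* (es) and
  to perfect matchings of G - x - y (the brick is bicritical), this pins down the surplus of C1 and
  C2 and the position of u and w; 3-connectivity rules out isolated vertices when one side of B is
  a single vertex. The cardinalities then follow from surplus V = 0 and card B = number of odd
  components, and the edge claims from e being the only edge of G - B between two components.\<close>

section \<open>Components and cut edges\<close>

lemma adj_sym: "adj V F ends x y \<Longrightarrow> adj V F ends y x"
  by (auto simp: adj_def insert_commute)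

lemma reach_in: "reach V F ends x y \<Longrightarrow> y \<in> V"
proof -
  assume "reach V F ends x y"
  then have "(adj V F ends)\<^sup>*\<^sup>* x y" "x \<in> V" by (auto simp: reach_def)
  then show "y \<in> V" by induction (auto simp: adj_def)
qed

lemma reach_sym: "reach V F ends x y \<Longrightarrow> reach V F ends y x"
  using reach_in[of V F ends x y] sympD[OF symp_rtranclp[OF sympI[OF adj_sym]]]
  by (auto simp: reach_def)

lemma reach_trans: "reach V F ends x y \<Longrightarrow> reach V F ends y z \<Longrightarrow> reach V F ends x z"
  by (auto simp: reach_def)

lemma reach_edge:
  "f \<in> F \<Longrightarrow> ends f = {x, y} \<Longrightarrow> x \<in> V \<Longrightarrow> y \<in> V \<Longrightarrow> reach V F ends x y"
proof -
  assume "f \<in> F" "ends f = {x, y}" "x \<in> V" "y \<in> V"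
  then have "adj V F ends x y" by (auto simp: adj_def)
  with \<open>x \<in> V\<close> show ?thesis by (simp add: reach_def)
qed

lemma component_eq:
  "K \<in> components V F ends \<Longrightarrow> y \<in> K \<Longrightarrow> K = {z. reach V F ends y z}"
  by (auto simp: components_def intro: reach_trans reach_sym)

lemma components_disjoint:
  "K \<in> components V F ends \<Longrightarrow> K' \<in> components V F ends \<Longrightarrow> y \<in> K \<Longrightarrow> y \<in> K' \<Longrightarrow> K = K'"
  using component_eq by metis

lemma component_subset: "K \<in> components V F ends \<Longrightarrow> K \<subseteq> V"
  by (auto simp: components_def dest: reach_in)

lemma in_component: "x \<in> V \<Longrightarrow> \<exists>K \<in> components V F ends. x \<in> K"
  by (auto simp: components_def reach_def)

lemma finite_components: "finite V \<Longrightarrow> finite (components V F ends)"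
  by (rule finite_subset[of _ "Pow V"]) (auto dest: component_subset)

lemma component_closed:
  assumes "K \<in> components V F ends" "f \<in> F" "ends f = {x, y}" "x \<in> K" "y \<in> V"
  shows "y \<in> K"
  using assms component_subset[OF assms(1)] component_eq[OF assms(1,4)] by (auto intro: reach_edge)

definition cut_edges :: "'e set \<Rightarrow> ('e \<Rightarrow> 'v set) \<Rightarrow> 'v set \<Rightarrow> 'e set" where
  "cut_edges P ends K = {f \<in> P. ends f \<inter> K \<noteq> {} \<and> \<not> ends f \<subseteq> K}"

lemma cut_edge_ends:
  assumes "f \<in> cut_edges P ends K" "card (ends f) = 2"
  obtains p q where "ends f = {p, q}" "p \<in> K" "q \<notin> K"
proof -
  obtain a b where ab: "ends f = {a, b}"
    using assms(2) by (auto simp: card_2_iff)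
  show thesis
  proof (cases "a \<in> K")
    case True
    then show thesis using that[of a b] assms(1) ab by (auto simp: cut_edges_def)
  next
    case False
    then show thesis using that[of b a] assms(1) ab by (auto simp: cut_edges_def insert_commute)
  qed
qed

lemma sum_over_covering_edges:
  fixes c :: "'v \<Rightarrow> 'a::comm_monoid_add"
  assumes "finite P" "finite K" "\<forall>v\<in>K. \<exists>!f. f \<in> P \<and> v \<in> ends f"
  shows "(\<Sum>v\<in>K. c v) = (\<Sum>f\<in>P. \<Sum>v\<in>ends f \<inter> K. c v)"
proof -
  have "(\<Sum>f\<in>P. \<Sum>v\<in>ends f \<inter> K. c v) = (\<Sum>f\<in>P. \<Sum>v\<in>K. if v \<in> ends f then c v else 0)"
  proof (rule sum.cong[OF refl])
    fix f
    have "ends f \<inter> K = {v \<in> K. v \<in> ends f}" by blast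
    then show "(\<Sum>v\<in>ends f \<inter> K. c v) = (\<Sum>v\<in>K. if v \<in> ends f then c v else 0)"
      by (simp only: sum.inter_filter[OF assms(2)])
  qed
  also have "\<dots> = (\<Sum>v\<in>K. \<Sum>f\<in>P. if v \<in> ends f then c v else 0)"
    by (rule sum.swap)
  also have "\<dots> = (\<Sum>v\<in>K. c v)"
  proof (rule sum.cong[OF refl])
    fix v assume "v \<in> K"
    with assms(3) have "\<exists>!f. f \<in> P \<and> v \<in> ends f" by (rule bspec)
    then obtain f where f: "f \<in> P \<and> v \<in> ends f" and uniq: "\<forall>g. g \<in> P \<and> v \<in> ends g \<longrightarrow> g = f"
      by (rule ex1E)
    have "(\<Sum>g\<in>P. if v \<in> ends g then c v else 0) = (\<Sum>g\<in>P. if g = f then c v else 0)"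
    proof (rule sum.cong[OF refl])
      fix g assume "g \<in> P"
      then have "v \<in> ends g \<longleftrightarrow> g = f" using uniq f by blast
      then show "(if v \<in> ends g then c v else 0) = (if g = f then c v else 0)" by simp
    qed
    then show "(\<Sum>g\<in>P. if v \<in> ends g then c v else 0) = c v"
      using f assms(1) by simp
  qed
  finally show ?thesis by simp
qed

lemma sum_inner_plus_cut:
  fixes c :: "'v \<Rightarrow> 'a::comm_monoid_add"
  assumes "finite P" "finite K" "\<forall>v\<in>K. \<exists>!f. f \<in> P \<and> v \<in> ends f"
  shows "(\<Sum>v\<in>K. c v) = (\<Sum>f\<in>{f \<in> P. ends f \<subseteq> K}. \<Sum>v\<in>ends f. c v)
           + (\<Sum>f\<in>cut_edges P ends K. \<Sum>v\<in>ends f \<inter> K. c v)"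
proof -
  let ?g = "\<lambda>f. \<Sum>v\<in>ends f \<inter> K. c v"
  let ?inner = "{f. ends f \<subseteq> K}"
  have "(\<Sum>v\<in>K. c v) = sum ?g P"
    by (rule sum_over_covering_edges[OF assms])
  also have "\<dots> = sum ?g (P \<inter> ?inner) + sum ?g (P - ?inner)"
    by (rule sum.Int_Diff[OF assms(1)])
  finally have "(\<Sum>v\<in>K. c v) = sum ?g (P \<inter> ?inner) + sum ?g (P - ?inner)" .
  moreover have "sum ?g (P \<inter> ?inner) = (\<Sum>f\<in>{f \<in> P. ends f \<subseteq> K}. \<Sum>v\<in>ends f. c v)"
    by (intro sum.cong) (auto simp: Int_absorb2)
  moreover have "sum ?g (P - ?inner) = sum ?g (cut_edges P ends K)"
    using assms(1) by (intro sum.mono_neutral_right) (auto simp: cut_edges_def)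
  ultimately show ?thesis by simp
qed

lemma odd_set_has_cut_edge:
  assumes "finite P" "finite K" "\<forall>v\<in>K. \<exists>!f. f \<in> P \<and> v \<in> ends f"
    and "\<forall>f\<in>P. card (ends f) = 2" and "odd (card K)"
  shows "cut_edges P ends K \<noteq> {}"
proof
  assume no_cut: "cut_edges P ends K = {}"
  have "card K = (\<Sum>f\<in>P. card (ends f \<inter> K))"
    using sum_over_covering_edges[OF assms(1-3), of "\<lambda>_. 1::nat"] by simp
  moreover have "even (card (ends f \<inter> K))" if "f \<in> P" for f
    using that no_cut assms(4) by (cases "ends f \<subseteq> K") (auto simp: cut_edges_def Int_absorb2)
  ultimately show False
    using assms(5) by (simp add: dvd_sum)
qed

lemma three_connected_vertex_escapes:
  assumes "three_connected V E ends" "y \<in> V" "X \<subseteq> V" "card X \<le> 2" "y \<notin> X"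
  shows "\<exists>f\<in>E. y \<in> ends f \<and> \<not> ends f \<subseteq> insert y X"
proof (rule ccontr)
  assume trapped: "\<not> ?thesis"
  have "finite V" "card V \<ge> 4" and conn: "connected_graph (V - X) (vdel E ends X) ends"
    using assms by (auto simp: three_connected_def graph_def)
  have "finite X" using \<open>finite V\<close> assms(3) finite_subset by blast
  have "\<not> V \<subseteq> insert y X"
  proof
    assume "V \<subseteq> insert y X"
    then have "card V \<le> card (insert y X)"
      using \<open>finite X\<close> by (intro card_mono) auto
    also have "\<dots> \<le> 3"
      using assms(4,5) \<open>finite X\<close> by simp
    finally show False using \<open>card V \<ge> 4\<close> by simp
  qed
  then obtain t where t: "t \<in> V" "t \<notin> insert y X" by blast
  have "(adj (V - X) (vdel E ends X) ends)\<^sup>*\<^sup>* y t"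
    using conn t assms(2,5) by (auto simp: connected_graph_def reach_def)
  then obtain z where "adj (V - X) (vdel E ends X) ends y z"
    using t(2) by (cases rule: converse_rtranclpE) auto
  then obtain f where f: "f \<in> E" "ends f = {y, z}" "z \<notin> X"
    by (auto simp: adj_def vdel_def)
  moreover have "z \<noteq> y"
    using f assms(1) by (auto simp: three_connected_def graph_def)
  ultimately show False using trapped by auto
qed

lemma sum_ge_minus_card:
  fixes g :: "'a \<Rightarrow> int"
  assumes "finite S" "finite N" "\<forall>x\<in>S. g x \<ge> 0 \<or> (g x \<ge> -1 \<and> x \<in> N)"
  shows "sum g S \<ge> - int (card N)"
proof -
  have "sum g S \<ge> (\<Sum>x\<in>S. if x \<in> N then -1 else 0)"
    using assms(3) by (intro sum_mono) auto
  moreover have "(\<Sum>x\<in>S. if x \<in> N then -1 else 0) = - int (card (S \<inter> N))"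
    using assms(1) by (simp add: sum.If_cases)
  moreover have "card (S \<inter> N) \<le> card N"
    using assms(2) by (intro card_mono) auto
  ultimately show ?thesis by linarith
qed

lemma singleton_or_two_elements: "S \<noteq> {} \<Longrightarrow> (\<exists>p. S = {p}) \<or> (\<exists>x\<in>S. \<exists>y\<in>S. x \<noteq> y)"
  by blast

section \<open>The decomposition with two nontrivial components\<close>

locale omega_two_decomposition =
  fixes V :: "'v set" and E :: "'e set" and ends :: "'e \<Rightarrow> 'v set"
    and e1 e2 e es :: 'e and U W B C1 C2 :: "'v set" and u w :: 'v
  assumes brick: "brick V E ends"
    and e12: "e1 \<in> E" "e2 \<in> E" "e1 \<noteq> e2"
    and H_mc: "matching_covered V (E - {e1, e2}) ends"
    and H_bip: "bipartite_with V (E - {e1, e2}) ends U W"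
    and e1U: "ends e1 \<subseteq> U" and e2W: "ends e2 \<subseteq> W"
    and eE: "e \<in> E - {e1, e2}"
    and uw: "u \<in> U" "w \<in> W" "ends e = {u, w}"
    and es: "es \<in> E - {e1, e2, e}"
    and B_bar: "barrier V (E - {e}) ends B" and esB: "ends es \<subseteq> B"
    and C1: "C1 \<in> components (V - B) (vdel (E - {e}) ends B) ends" "card C1 > 1"
    and C2: "C2 \<in> components (V - B) (vdel (E - {e}) ends B) ends" "card C2 > 1"
    and C12: "C1 \<noteq> C2"
    and omega2: "\<forall>C \<in> components (V - B) (vdel (E - {e}) ends B) ends. card C > 1 \<longrightarrow> C = C1 \<or> C = C2"
    and e2C1: "ends e2 \<subseteq> C1" and e1C2: "ends e1 \<subseteq> C2"
begin

abbreviation comps :: "'v set set" where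
  "comps \<equiv> components (V - B) (vdel (E - {e}) ends B) ends"

abbreviation isolated :: "'v set \<Rightarrow> 'v set" where
  "isolated X \<equiv> {x \<in> X. {x} \<in> comps}"

lemma G_three_connected: "three_connected V E ends"
  using brick by (simp add: brick_def)

lemma G_bicritical:
  "x \<in> V \<Longrightarrow> y \<in> V \<Longrightarrow> x \<noteq> y \<Longrightarrow> \<exists>M. perfect_matching (V - {x, y}) (vdel E ends {x, y}) ends M"
  using brick by (simp add: brick_def)

lemma finite_V: "finite V" and finite_E: "finite E"
  using G_three_connected by (auto simp: three_connected_def graph_def)

lemma edge_ends: "f \<in> E \<Longrightarrow> ends f \<subseteq> V \<and> card (ends f) = 2"
  using G_three_connected by (auto simp: three_connected_def graph_def)

lemma edge_card: "f \<in> E \<Longrightarrow> card (ends f) = 2"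
  using edge_ends by blast

lemma finite_ends: "f \<in> E \<Longrightarrow> finite (ends f)"
  using edge_card card_ge_0_finite by force

lemma U_W_partition: "U \<union> W = V" "U \<inter> W = {}"
  using H_bip by (auto simp: bipartite_with_def)

lemma H_edge: "f \<in> E \<Longrightarrow> f \<noteq> e1 \<Longrightarrow> f \<noteq> e2 \<Longrightarrow> \<exists>p\<in>U. \<exists>q\<in>W. ends f = {p, q}"
  using H_bip by (auto simp: bipartite_with_def)

lemma B_subset: "B \<subseteq> V"
  using B_bar by (simp add: barrier_def)

lemma comp_subset: "K \<in> comps \<Longrightarrow> K \<subseteq> V - B"
  by (rule component_subset)

lemma finite_comp: "K \<in> comps \<Longrightarrow> finite K"
  using comp_subset finite_V by (meson finite_Diff finite_subset)

lemma finite_comps: "finite comps"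
  using finite_V by (simp add: finite_components)

lemma component_exit:
  assumes K: "K \<in> comps" and f: "f \<in> E" "f \<noteq> e" "ends f = {p, q}" and "p \<in> K" "q \<notin> K"
  shows "q \<in> B"
proof (rule ccontr)
  assume "q \<notin> B"
  moreover have "p \<notin> B" using comp_subset[OF K] \<open>p \<in> K\<close> by blast
  moreover have "q \<in> V" using edge_ends[OF f(1)] f(3) by blast
  ultimately have "f \<in> vdel (E - {e}) ends B" "q \<in> V - B"
    using f by (auto simp: vdel_def)
  then show False
    using component_closed[OF K _ f(3) \<open>p \<in> K\<close>] \<open>q \<notin> K\<close> by blast
qed

lemma component_cases: "v \<in> V - B \<Longrightarrow> v \<in> C1 \<or> v \<in> C2 \<or> {v} \<in> comps"
proof -
  assume "v \<in> V - B"
  then obtain K where K: "K \<in> comps" "v \<in> K"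
    using in_component[of v "V - B" "vdel (E - {e}) ends B" ends] by blast
  show ?thesis
  proof (cases "card K > 1")
    case True
    then have "K = C1 \<or> K = C2" using omega2 K(1) by blast
    then show ?thesis using K(2) by blast
  next
    case False
    then have "K = {v}"
      using K finite_comp[OF K(1)] by (auto simp: card_le_Suc0_iff_eq not_less)
    then show ?thesis using K by simp
  qed
qed

lemma C1_C2_disjoint: "C1 \<inter> C2 = {}"
  using components_disjoint[OF C1(1) C2(1)] C12 by blast

lemma singleton_not_in_C12: "{x} \<in> comps \<Longrightarrow> x \<notin> C1 \<and> x \<notin> C2"
  using components_disjoint[OF _ C1(1), of "{x}" x] components_disjoint[OF _ C2(1), of "{x}" x] C1(2) C2(2)
  by auto

lemma edge_ends_nonempty: "f \<in> E \<Longrightarrow> ends f \<noteq> {}"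
  using edge_ends by fastforce

lemma e1_not_in_C1: "\<not> ends e1 \<subseteq> C1"
  using e1C2 C1_C2_disjoint edge_ends_nonempty[OF e12(1)] by blast

lemma e2_not_in_C2: "\<not> ends e2 \<subseteq> C2"
  using e2C1 C1_C2_disjoint edge_ends_nonempty[OF e12(2)] by blast

section \<open>Surplus\<close>

definition side_sign :: "'v \<Rightarrow> int" where
  "side_sign v = (if v \<in> W then 1 else -1)"

definition surplus :: "'v set \<Rightarrow> int" where
  "surplus X = (\<Sum>v\<in>X. side_sign v)"

lemma surplus_eq_card: "X \<subseteq> V \<Longrightarrow> surplus X = int (card (X \<inter> W)) - int (card (X \<inter> U))"
proof -
  assume X: "X \<subseteq> V"
  then have "finite X" using finite_V finite_subset by blast
  have "X = (X \<inter> W) \<union> (X \<inter> U)" "(X \<inter> W) \<inter> (X \<inter> U) = {}" using X U_W_partition by blast+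
  then have "surplus X = surplus (X \<inter> W) + surplus (X \<inter> U)"
    unfolding surplus_def using \<open>finite X\<close> by (metis finite_Un sum.union_disjoint)
  moreover have "surplus (X \<inter> U) = - int (card (X \<inter> U))"
    using U_W_partition by (simp add: surplus_def side_sign_def disjoint_iff)
  ultimately show ?thesis
    by (simp add: surplus_def side_sign_def)
qed

lemma surplus_union:
  "finite X \<Longrightarrow> finite Y \<Longrightarrow> X \<inter> Y = {} \<Longrightarrow> surplus (X \<union> Y) = surplus X + surplus Y"
  by (simp add: surplus_def sum.union_disjoint)

lemma odd_card_if_odd_surplus: "X \<subseteq> V \<Longrightarrow> odd (surplus X) \<Longrightarrow> odd (card X)"
proof -
  assume X: "X \<subseteq> V" "odd (surplus X)"
  have "finite X" using X finite_V finite_subset by blast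
  have "card X = card (X \<inter> W) + card (X \<inter> U)"
    using \<open>finite X\<close> X U_W_partition by (subst card_Un_disjoint[symmetric]) (auto intro: arg_cong[where f = card])
  then show ?thesis
    using X surplus_eq_card[OF X(1)] by presburger
qed

lemma edge_sign_sum:
  assumes "f \<in> E"
  shows "(\<Sum>v\<in>ends f. side_sign v) = (if f = e2 then 2 else if f = e1 then -2 else 0)"
proof -
  obtain a b where ab: "ends f = {a, b}" "a \<noteq> b"
    using edge_ends[OF assms] by (auto simp: card_2_iff)
  consider "f = e2" | "f = e1" | "f \<noteq> e1" "f \<noteq> e2" by blast
  then show ?thesis
  proof cases
    case 1
    then show ?thesis using ab e2W by (simp add: side_sign_def)
  next
    case 2
    then show ?thesis using ab e1U U_W_partition e12(3) by (auto simp: side_sign_def)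
  next
    case 3
    then obtain p q where pq: "p \<in> U" "q \<in> W" "ends f = {p, q}" using H_edge assms by blast
    then have "p \<notin> W" "p \<noteq> q" using U_W_partition by auto
    then show ?thesis using pq 3 by (simp add: side_sign_def)
  qed
qed

definition cut_surplus :: "'e set \<Rightarrow> 'v set \<Rightarrow> int" where
  "cut_surplus P K = (\<Sum>f\<in>cut_edges P ends K. \<Sum>v\<in>ends f \<inter> K. side_sign v)"

lemma surplus_decomposition:
  assumes P: "P \<subseteq> E" and K: "K \<subseteq> V" and cover: "\<forall>v\<in>K. \<exists>!f. f \<in> P \<and> v \<in> ends f"
  shows "surplus K = (if e2 \<in> P \<and> ends e2 \<subseteq> K then 2 else 0) - (if e1 \<in> P \<and> ends e1 \<subseteq> K then 2 else 0)
           + cut_surplus P K"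
proof -
  define I where "I = {f \<in> P. ends f \<subseteq> K}"
  have "finite P" "finite K" using P K finite_E finite_V finite_subset by blast+
  then have "surplus K = (\<Sum>f\<in>I. \<Sum>v\<in>ends f. side_sign v) + cut_surplus P K"
    unfolding surplus_def cut_surplus_def I_def using sum_inner_plus_cut cover by blast
  also have "(\<Sum>f\<in>I. \<Sum>v\<in>ends f. side_sign v) = (\<Sum>f\<in>I. (if f = e2 then 2 else 0) + (if f = e1 then -2 else 0))"
    using P e12(3) by (intro sum.cong) (auto simp: I_def edge_sign_sum)
  also have "\<dots> = (if e2 \<in> I then 2 else 0) - (if e1 \<in> I then 2 else 0)"
    using \<open>finite P\<close> by (simp add: sum.distrib I_def)
  finally show ?thesis by (simp add: I_def)
qed

section \<open>Matchings saturating the barrier\<close>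

text \<open>P covers V - B exactly, each vertex of B at most once, and x, y only by edges inside B:
  both a perfect matching of H through e* (with x, y the ends of e*) and a perfect matching of
  G - x - y are of this kind.\<close>

definition barrier_matching :: "'e set \<Rightarrow> 'v \<Rightarrow> 'v \<Rightarrow> bool" where
  "barrier_matching P x y \<longleftrightarrow> P \<subseteq> E \<and> (\<forall>v\<in>V - B. \<exists>!f. f \<in> P \<and> v \<in> ends f)
     \<and> (\<forall>b\<in>B. \<forall>f\<in>P. \<forall>g\<in>P. b \<in> ends f \<longrightarrow> b \<in> ends g \<longrightarrow> f = g)
     \<and> x \<in> B \<and> y \<in> B \<and> x \<noteq> y \<and> (\<forall>f\<in>P. x \<in> ends f \<or> y \<in> ends f \<longrightarrow> ends f \<subseteq> B)"

lemma barrier_matching_cover: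
  assumes "barrier_matching P x y" "K \<subseteq> V - B"
  shows "\<forall>v\<in>K. \<exists>!f. f \<in> P \<and> v \<in> ends f"
proof
  fix v assume "v \<in> K"
  from assms(1) have "\<forall>v\<in>V - B. \<exists>!f. f \<in> P \<and> v \<in> ends f" by (simp add: barrier_matching_def)
  then show "\<exists>!f. f \<in> P \<and> v \<in> ends f" using assms(2) \<open>v \<in> K\<close> by blast
qed

text \<open>The end through which a cut edge f of K is counted: its end in B, or its end in K if
  f = e. For cut edges this set is a singleton, so the_elem is never applied to junk.\<close>

definition port :: "'v set \<Rightarrow> 'e \<Rightarrow> 'v" where
  "port K f = the_elem (ends f \<inter> (if f = e then K else B))"

lemma port_of_cut_edge:
  assumes K: "K \<in> comps" and P: "P \<subseteq> E" and f: "f \<in> cut_edges P ends K"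
  shows "port K f \<in> ends f" and "f = e \<Longrightarrow> port K f \<in> K" and "f \<noteq> e \<Longrightarrow> port K f \<in> B"
proof -
  have fE: "f \<in> E" using f P by (auto simp: cut_edges_def)
  obtain p q where pq: "ends f = {p, q}" "p \<in> K" "q \<notin> K"
    using cut_edge_ends[OF f edge_card[OF fE]] by blast
  have "p \<notin> B" using comp_subset[OF K] pq(2) by blast
  have "port K f \<in> ends f \<and> (f = e \<longrightarrow> port K f \<in> K) \<and> (f \<noteq> e \<longrightarrow> port K f \<in> B)"
  proof (cases "f = e")
    case True
    then have "ends f \<inter> (if f = e then K else B) = {p}" using pq by auto
    then show ?thesis using True pq by (simp add: port_def)
  next
    case False
    have "q \<in> B" by (rule component_exit[OF K fE False pq])
    then have "ends f \<inter> (if f = e then K else B) = {q}" using False pq \<open>p \<notin> B\<close> by auto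
    then show ?thesis using False pq \<open>q \<in> B\<close> by (simp add: port_def)
  qed
  then show "port K f \<in> ends f" "f = e \<Longrightarrow> port K f \<in> K" "f \<noteq> e \<Longrightarrow> port K f \<in> B"
    by blast+
qed

lemma cut_edge_at_B_determines_component:
  assumes K: "K \<in> comps" "K' \<in> comps" and f: "f \<in> cut_edges P ends K" "f \<in> cut_edges P ends K'"
    and P: "P \<subseteq> E" and b: "b \<in> B" "b \<in> ends f"
  shows "K = K'"
proof -
  have fE: "f \<in> E" using f P by (auto simp: cut_edges_def)
  obtain p q where pq: "ends f = {p, q}" "p \<in> K" using cut_edge_ends[OF f(1) edge_card[OF fE]] by blast
  obtain p' q' where pq': "ends f = {p', q'}" "p' \<in> K'" using cut_edge_ends[OF f(2) edge_card[OF fE]] by blast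
  have "p \<notin> B" "p' \<notin> B" using comp_subset K pq(2) pq'(2) by blast+
  then have "p' \<noteq> b" "p' \<in> {p, b}" using pq pq' b by auto
  then have "p = p'" by blast
  then show ?thesis using components_disjoint[OF K pq(2)] pq'(2) by simp
qed

definition cut_pairs :: "'e set \<Rightarrow> ('v set \<times> 'e) set" where
  "cut_pairs P = (SIGMA K:comps. cut_edges P ends K)"

lemma port_inj:
  assumes "barrier_matching P x y"
  shows "inj_on (\<lambda>(K, f). port K f) (cut_pairs P)"
proof (rule inj_onI, clarsimp simp: cut_pairs_def)
  fix K f K' f'
  assume K: "K \<in> comps" "f \<in> cut_edges P ends K" and K': "K' \<in> comps" "f' \<in> cut_edges P ends K'"
    and eq: "port K f = port K' f'"
  have P: "P \<subseteq> E" and B_once: "\<forall>b\<in>B. \<forall>f\<in>P. \<forall>g\<in>P. b \<in> ends f \<longrightarrow> b \<in> ends g \<longrightarrow> f = g"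
    using assms by (auto simp: barrier_matching_def)
  note pf = port_of_cut_edge[OF K(1) P K(2)] and pf' = port_of_cut_edge[OF K'(1) P K'(2)]
  show "K = K' \<and> f = f'"
  proof (cases "port K f \<in> B")
    case True
    have "f \<in> P" "f' \<in> P" using K(2) K'(2) by (auto simp: cut_edges_def)
    then have "f = f'" using B_once[rule_format, OF True \<open>f \<in> P\<close> \<open>f' \<in> P\<close> pf(1)] pf'(1) eq by simp
    then show ?thesis
      using cut_edge_at_B_determines_component[OF K(1) K'(1) K(2) _ P True pf(1)] K'(2) by blast
  next
    case False
    then have "f = e" "f' = e" using pf(3) pf'(3) eq by auto
    then have "port K f \<in> K" "port K f \<in> K'" using pf(2) pf'(2) eq by simp_all
    then have "K = K'" by (rule components_disjoint[OF K(1) K'(1)])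
    then show ?thesis using \<open>f = e\<close> \<open>f' = e\<close> by simp
  qed
qed

lemma finite_cut_edges: "P \<subseteq> E \<Longrightarrow> finite (cut_edges P ends K)"
  using finite_E by (auto simp: cut_edges_def intro: finite_subset)

lemma finite_cut_pairs: "P \<subseteq> E \<Longrightarrow> finite (cut_pairs P)"
  unfolding cut_pairs_def by (intro finite_SigmaI finite_comps finite_cut_edges)

lemma odd_components_have_cut_pairs:
  assumes bm: "barrier_matching P x y"
  shows "{K \<in> comps. odd (card K)} \<subseteq> fst ` cut_pairs P"
proof
  fix K assume "K \<in> {K \<in> comps. odd (card K)}"
  then have K: "K \<in> comps" "odd (card K)" by auto
  have P: "P \<subseteq> E" using bm by (simp add: barrier_matching_def)
  then have "finite P" using finite_E finite_subset by blast
  then obtain f where "f \<in> cut_edges P ends K"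
    using odd_set_has_cut_edge[OF _ finite_comp[OF K(1)] barrier_matching_cover[OF bm comp_subset[OF K(1)]]
        _ K(2)] P edge_card by blast
  then show "K \<in> fst ` cut_pairs P" using K(1) by (force simp: cut_pairs_def)
qed

lemma port_range:
  assumes bm: "barrier_matching P x y"
  shows "(\<lambda>(K, f). port K f) ` cut_pairs P \<subseteq> (B - {x, y}) \<union> (ends e - B)"
proof
  fix t assume "t \<in> (\<lambda>(K, f). port K f) ` cut_pairs P"
  then obtain K f where K: "K \<in> comps" "f \<in> cut_edges P ends K" and t: "t = port K f"
    by (auto simp: cut_pairs_def)
  have P: "P \<subseteq> E" and inside: "\<forall>f\<in>P. x \<in> ends f \<or> y \<in> ends f \<longrightarrow> ends f \<subseteq> B"
    using bm by (auto simp: barrier_matching_def)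
  note pf = port_of_cut_edge[OF K(1) P K(2)]
  have "port K f \<in> (B - {x, y}) \<union> (ends e - B)"
  proof (cases "f = e")
    case True
    then show ?thesis using pf comp_subset[OF K(1)] by auto
  next
    case False
    have "f \<in> P" "\<not> ends f \<subseteq> B" using K(2) comp_subset[OF K(1)] by (auto simp: cut_edges_def)
    then have "port K f \<noteq> x" "port K f \<noteq> y" using inside pf(1) by blast+
    then show ?thesis using pf(3) False by auto
  qed
  then show "t \<in> (B - {x, y}) \<union> (ends e - B)" using t by simp
qed

text \<open>Distinct cut pairs have distinct ports, all in (B - {x, y}) \<union> (ends e - B), a set of at
  most card B elements, while the card B odd components each give a cut pair: every inequality
  in the proof below is tight.\<close>

lemma barrier_matching_counting:
  assumes bm: "barrier_matching P x y"
  shows "ends e \<inter> B = {}" and "fst ` cut_pairs P = {K \<in> comps. odd (card K)}"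
    and "inj_on fst (cut_pairs P)" and "ends e \<subseteq> (\<lambda>(K, f). port K f) ` cut_pairs P"
proof -
  define OC where "OC = {K \<in> comps. odd (card K)}"
  define T where "T = (B - {x, y}) \<union> (ends e - B)"
  let ?A = "cut_pairs P" and ?port = "\<lambda>(K, f). port K f"
  have xy: "x \<in> B" "y \<in> B" "x \<noteq> y" and P: "P \<subseteq> E" using bm by (auto simp: barrier_matching_def)
  have finite_A: "finite ?A" using P by (rule finite_cut_pairs)
  have finite_B: "finite B" using B_subset finite_V finite_subset by blast
  have finite_T: "finite T" unfolding T_def using finite_B finite_ends[of e] eE by blast
  note OC_A = odd_components_have_cut_pairs[OF bm, folded OC_def]
  note A_T = port_range[OF bm, folded T_def]
  have "card B = card OC" using B_bar by (simp add: barrier_def OC_def)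
  moreover have "card OC \<le> card (fst ` ?A)" using OC_A finite_A by (intro card_mono) auto
  moreover have "card (fst ` ?A) \<le> card ?A" using finite_A by (rule card_image_le)
  moreover have "card ?A = card (?port ` ?A)" using card_image[OF port_inj[OF bm]] by simp
  moreover have "card (?port ` ?A) \<le> card T" by (rule card_mono[OF finite_T A_T])
  moreover have "card T \<le> card (B - {x, y}) + card (ends e - B)" unfolding T_def by (rule card_Un_le)
  moreover have "card (B - {x, y}) = card B - 2" using xy finite_B by (simp add: card_Diff_subset)
  moreover have "card B \<ge> 2" using xy finite_B card_mono[of B "{x, y}"] by simp
  moreover have "card (ends e - B) \<le> card (ends e)" using finite_ends[of e] eE by (simp add: card_mono)
  moreover have "card (ends e) = 2" using edge_card eE by blast
  ultimately have tight: "card (ends e - B) = card (ends e)" "card (fst ` ?A) = card OC"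
    "card (fst ` ?A) = card ?A" "card (?port ` ?A) = card T"
    by arith+
  have "ends e - B = ends e" using tight(1) finite_ends[of e] eE by (intro card_subset_eq) auto
  then show "ends e \<inter> B = {}" by blast
  show "fst ` ?A = {K \<in> comps. odd (card K)}"
    using card_subset_eq[OF finite_imageI[OF finite_A] OC_A] tight(2) by (simp add: OC_def)
  show "inj_on fst ?A" using tight(3) finite_A by (simp add: inj_on_iff_eq_card)
  have "?port ` ?A = T" using card_subset_eq[OF finite_T A_T] tight(4) by simp
  then show "ends e \<subseteq> ?port ` ?A" using \<open>ends e - B = ends e\<close> by (auto simp: T_def)
qed

lemma barrier_matching_cut_card:
  assumes bm: "barrier_matching P x y" and K: "K \<in> comps"
  shows "card (cut_edges P ends K) = (if odd (card K) then 1 else 0)"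
proof -
  note count = barrier_matching_counting[OF bm]
  have pair: "(K, f) \<in> cut_pairs P \<longleftrightarrow> f \<in> cut_edges P ends K" for f
    using K by (simp add: cut_pairs_def)
  show ?thesis
  proof (cases "odd (card K)")
    case True
    then have "K \<in> fst ` cut_pairs P" using count(2) K by blast
    then obtain f where f: "f \<in> cut_edges P ends K" using pair by force
    have "g = f" if "g \<in> cut_edges P ends K" for g
      using inj_onD[OF count(3), of "(K, g)" "(K, f)"] that f pair by simp
    then have "cut_edges P ends K = {f}" using f by blast
    then show ?thesis using True by simp
  next
    case False
    then have "K \<notin> fst ` cut_pairs P" using count(2) by blast
    then have "cut_edges P ends K = {}" using pair by force
    then show ?thesis using False by simp
  qed
qed

lemma barrier_matching_cuts_at_e:
  assumes bm: "barrier_matching P x y" and K: "K \<in> comps" and v: "v \<in> ends e" "v \<in> K"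
  shows "cut_edges P ends K = {e}"
proof -
  note count = barrier_matching_counting[OF bm]
  have P: "P \<subseteq> E" using bm by (simp add: barrier_matching_def)
  obtain K' f where Kf: "(K', f) \<in> cut_pairs P" "v = port K' f"
    using count(4) v(1) by auto
  then have K': "K' \<in> comps" "f \<in> cut_edges P ends K'" by (auto simp: cut_pairs_def)
  have "v \<notin> B" using count(1) v(1) by blast
  then have "f = e" using port_of_cut_edge(3)[OF K'(1) P K'(2)] Kf(2) by blast
  then have "v \<in> K'" using port_of_cut_edge(2)[OF K'(1) P K'(2)] Kf(2) by simp
  then have "K' = K" using components_disjoint[OF K'(1) K] v(2) by simp
  then have "e \<in> cut_edges P ends K" using K' \<open>f = e\<close> by simp
  moreover have "card (cut_edges P ends K) \<le> 1" using barrier_matching_cut_card[OF bm K] by simp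
  moreover have "finite (cut_edges P ends K)" using P by (rule finite_cut_edges)
  ultimately show ?thesis by (auto simp: card_le_Suc0_iff_eq)
qed

lemma barrier_matching_separates_u_w:
  "barrier_matching P x y \<Longrightarrow> K \<in> comps \<Longrightarrow> u \<in> K \<Longrightarrow> w \<notin> K"
  using barrier_matching_cuts_at_e[of P x y K u] uw by (auto simp: cut_edges_def)

definition surplus_range :: "'v set \<Rightarrow> int set" where
  "surplus_range K = (if u \<in> K then {-1} else if w \<in> K then {1} else if odd (card K) then {-1, 1} else {0})"

lemma cut_surplus_in_range:
  assumes bm: "barrier_matching P x y" and K: "K \<in> comps"
  shows "cut_surplus P K \<in> surplus_range K"
proof -
  have P: "P \<subseteq> E" using bm by (simp add: barrier_matching_def)
  have single_edge: "cut_surplus P K \<in> {-1, 1}" if "cut_edges P ends K = {f}" for f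
  proof -
    have f: "f \<in> cut_edges P ends K" using that by blast
    then have "f \<in> E" using P by (auto simp: cut_edges_def)
    then obtain p q where "ends f = {p, q}" "p \<in> K" "q \<notin> K"
      using cut_edge_ends[OF f edge_card] by blast
    then have "ends f \<inter> K = {p}" by auto
    then show ?thesis using that by (simp add: cut_surplus_def side_sign_def)
  qed
  consider (u) "u \<in> K" | (w) "u \<notin> K" "w \<in> K" | (other) "u \<notin> K" "w \<notin> K" by blast
  then show ?thesis
  proof cases
    case u
    have "w \<notin> K" by (rule barrier_matching_separates_u_w[OF bm K u])
    then have "ends e \<inter> K = {u}" using u uw by auto
    moreover have "cut_edges P ends K = {e}"
      by (rule barrier_matching_cuts_at_e[OF bm K _ u]) (simp add: uw)
    ultimately have "cut_surplus P K = side_sign u" by (simp add: cut_surplus_def)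
    then show ?thesis using u uw U_W_partition by (auto simp: side_sign_def surplus_range_def)
  next
    case w
    then have "ends e \<inter> K = {w}" using uw by auto
    moreover have "cut_edges P ends K = {e}"
      by (rule barrier_matching_cuts_at_e[OF bm K _ w(2)]) (simp add: uw)
    ultimately have "cut_surplus P K = side_sign w" by (simp add: cut_surplus_def)
    then show ?thesis using w uw by (simp add: side_sign_def surplus_range_def)
  next
    case other
    show ?thesis
    proof (cases "odd (card K)")
      case True
      then obtain f where "cut_edges P ends K = {f}"
        using barrier_matching_cut_card[OF bm K] by (auto simp: card_1_singleton_iff)
      then show ?thesis using single_edge other True by (simp add: surplus_range_def)
    next
      case False
      have "finite (cut_edges P ends K)" using P by (rule finite_cut_edges)
      then have "cut_edges P ends K = {}" using barrier_matching_cut_card[OF bm K] False by simp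
      then show ?thesis using other False by (simp add: surplus_range_def cut_surplus_def)
    qed
  qed
qed

lemma barrier_matching_surplus_C1:
  assumes bm: "barrier_matching P x y"
  shows "surplus C1 - (if e2 \<in> P then 2 else 0) \<in> surplus_range C1"
proof -
  have P: "P \<subseteq> E" using bm by (simp add: barrier_matching_def)
  have C1V: "C1 \<subseteq> V" using comp_subset[OF C1(1)] by blast
  have cover: "\<forall>v\<in>C1. \<exists>!f. f \<in> P \<and> v \<in> ends f"
    by (rule barrier_matching_cover[OF bm comp_subset[OF C1(1)]])
  show ?thesis
    using surplus_decomposition[OF P C1V cover] comp_subset[OF C1(1)] cut_surplus_in_range[OF bm C1(1)]
      e2C1 e1_not_in_C1 by auto
qed

lemma barrier_matching_surplus_C2:
  assumes bm: "barrier_matching P x y"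
  shows "surplus C2 + (if e1 \<in> P then 2 else 0) \<in> surplus_range C2"
proof -
  have P: "P \<subseteq> E" using bm by (simp add: barrier_matching_def)
  have C2V: "C2 \<subseteq> V" using comp_subset[OF C2(1)] by blast
  have cover: "\<forall>v\<in>C2. \<exists>!f. f \<in> P \<and> v \<in> ends f"
    by (rule barrier_matching_cover[OF bm comp_subset[OF C2(1)]])
  show ?thesis
    using surplus_decomposition[OF P C2V cover] comp_subset[OF C2(1)] cut_surplus_in_range[OF bm C2(1)]
      e1C2 e2_not_in_C2 by auto
qed

lemma es_ends_in_B: "\<exists>p q. p \<in> B \<inter> U \<and> q \<in> B \<inter> W \<and> ends es = {p, q}"
  using H_edge[of es] es esB by auto

lemma barrier_matching_from_H:
  "\<exists>P x y. barrier_matching P x y \<and> e1 \<notin> P \<and> e2 \<notin> P \<and> (\<forall>v\<in>V. \<exists>!f. f \<in> P \<and> v \<in> ends f)"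
proof -
  obtain P where P: "perfect_matching V (E - {e1, e2}) ends P" "es \<in> P"
    using H_mc es by (auto simp: matching_covered_def admissible_def)
  obtain p q where pq: "p \<in> B \<inter> U" "q \<in> B \<inter> W" "ends es = {p, q}" using es_ends_in_B by blast
  have cover: "\<forall>v\<in>V. \<exists>!f. f \<in> P \<and> v \<in> ends f" and PE: "P \<subseteq> E - {e1, e2}"
    using P by (auto simp: perfect_matching_def)
  have once: "\<forall>b\<in>B. \<forall>f\<in>P. \<forall>g\<in>P. b \<in> ends f \<longrightarrow> b \<in> ends g \<longrightarrow> f = g"
    using cover B_subset by blast
  have "f = es" if "f \<in> P" "p \<in> ends f \<or> q \<in> ends f" for f
    using once that P(2) pq by auto
  then have "\<forall>f\<in>P. p \<in> ends f \<or> q \<in> ends f \<longrightarrow> ends f \<subseteq> B"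
    using esB by blast
  moreover have "p \<noteq> q" using pq U_W_partition by blast
  moreover have "\<forall>v\<in>V - B. \<exists>!f. f \<in> P \<and> v \<in> ends f"
  proof
    fix v assume "v \<in> V - B"
    then have "v \<in> V" by blast
    with cover show "\<exists>!f. f \<in> P \<and> v \<in> ends f" by (rule bspec)
  qed
  moreover have "P \<subseteq> E" using PE by blast
  ultimately have "barrier_matching P p q"
    unfolding barrier_matching_def using once pq by (intro conjI) blast+
  then show ?thesis using PE cover by blast
qed

lemma surplus_V: "surplus V = 0"
proof -
  obtain P x y where P: "barrier_matching P x y" "e1 \<notin> P" "e2 \<notin> P" "\<forall>v\<in>V. \<exists>!f. f \<in> P \<and> v \<in> ends f"
    using barrier_matching_from_H by blast
  have PE: "P \<subseteq> E" using P(1) by (simp add: barrier_matching_def)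
  then have "cut_edges P ends V = {}" using edge_ends by (auto simp: cut_edges_def)
  then show ?thesis using surplus_decomposition[OF PE _ P(4)] P(2,3) by (simp add: cut_surplus_def)
qed

lemma surplus_C1_in_range: "surplus C1 \<in> surplus_range C1"
  and surplus_C2_in_range: "surplus C2 \<in> surplus_range C2"
  and u_w_outside_B: "u \<notin> B" "w \<notin> B"
  and u_w_separated: "K \<in> comps \<Longrightarrow> u \<in> K \<Longrightarrow> w \<notin> K"
proof -
  obtain P x y where P: "barrier_matching P x y" "e1 \<notin> P" "e2 \<notin> P"
    using barrier_matching_from_H by blast
  show "surplus C1 \<in> surplus_range C1" using barrier_matching_surplus_C1[OF P(1)] P(3) by simp
  show "surplus C2 \<in> surplus_range C2" using barrier_matching_surplus_C2[OF P(1)] P(2) by simp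
  show "u \<notin> B" "w \<notin> B" using barrier_matching_counting(1)[OF P(1)] uw by auto
  show "K \<in> comps \<Longrightarrow> u \<in> K \<Longrightarrow> w \<notin> K" using barrier_matching_separates_u_w[OF P(1)] by blast
qed

lemma bicritical_barrier_matching:
  assumes xy: "x \<in> B" "y \<in> B" "x \<noteq> y"
  obtains P where "barrier_matching P x y"
    and "surplus (V - {x, y}) = (if e2 \<in> P then 2 else 0) - (if e1 \<in> P then 2 else 0)"
proof -
  obtain P where P: "perfect_matching (V - {x, y}) (vdel E ends {x, y}) ends P"
    using G_bicritical xy B_subset by blast
  have PE: "P \<subseteq> E" and avoid: "\<forall>f\<in>P. ends f \<inter> {x, y} = {}"
    and cover: "\<forall>v\<in>V - {x, y}. \<exists>!f. f \<in> P \<and> v \<in> ends f"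
    using P by (auto simp: perfect_matching_def vdel_def)
  have "barrier_matching P x y"
    unfolding barrier_matching_def using PE cover avoid xy B_subset by blast
  moreover have "cut_edges P ends (V - {x, y}) = {}"
    using PE avoid edge_ends by (auto simp: cut_edges_def)
  moreover have "ends f \<subseteq> V - {x, y}" if "f \<in> P" for f
    using that PE avoid edge_ends by blast
  ultimately show ?thesis
    using that surplus_decomposition[OF PE _ cover] by (auto simp: cut_surplus_def)
qed

lemma surplus_remove_two:
  "x \<in> V \<Longrightarrow> y \<in> V \<Longrightarrow> x \<noteq> y \<Longrightarrow> surplus (V - {x, y}) = surplus V - side_sign x - side_sign y"
  using finite_V sum.subset_diff[of "{x, y}" V side_sign] by (simp add: surplus_def)

lemma surplus_C1_if_two_in_B_U:
  assumes "x \<in> B \<inter> U" "y \<in> B \<inter> U" "x \<noteq> y"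
  shows "surplus C1 = 1 \<and> u \<notin> C1 \<and> w \<notin> C1"
proof -
  obtain P where P: "barrier_matching P x y"
    and bal: "surplus (V - {x, y}) = (if e2 \<in> P then 2 else 0) - (if e1 \<in> P then 2 else 0)"
    using bicritical_barrier_matching assms by blast
  have "x \<in> V" "y \<in> V" using assms B_subset by auto
  then have "surplus (V - {x, y}) = 2"
    using surplus_remove_two assms surplus_V U_W_partition by (auto simp: side_sign_def)
  then have "e2 \<in> P" using bal by (auto split: if_splits)
  then show ?thesis
    using barrier_matching_surplus_C1[OF P] surplus_C1_in_range
    by (auto simp: surplus_range_def split: if_splits)
qed

lemma surplus_C2_if_two_in_B_W:
  assumes "x \<in> B \<inter> W" "y \<in> B \<inter> W" "x \<noteq> y"
  shows "surplus C2 = -1 \<and> u \<notin> C2 \<and> w \<notin> C2"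
proof -
  obtain P where P: "barrier_matching P x y"
    and bal: "surplus (V - {x, y}) = (if e2 \<in> P then 2 else 0) - (if e1 \<in> P then 2 else 0)"
    using bicritical_barrier_matching assms by blast
  have "x \<in> V" "y \<in> V" using assms B_subset by auto
  then have "surplus (V - {x, y}) = -2"
    using surplus_remove_two assms surplus_V by (auto simp: side_sign_def)
  then have "e1 \<in> P" using bal by (auto split: if_splits)
  then show ?thesis
    using barrier_matching_surplus_C2[OF P] surplus_C2_in_range
    by (auto simp: surplus_range_def split: if_splits)
qed

section \<open>Locating u and w\<close>

lemma singleton_component_edge:
  assumes y: "{y} \<in> comps" and f: "f \<in> E" "y \<in> ends f"
  shows "\<exists>z. ends f = {y, z} \<and> z \<in> ends e \<union> B \<and> (y \<in> U \<longleftrightarrow> z \<in> W)"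
proof -
  have "y \<notin> C1" "y \<notin> C2" using singleton_not_in_C12[OF y] by auto
  then have "f \<noteq> e1" "f \<noteq> e2" using f(2) e1C2 e2C1 by auto
  then obtain p q where pq: "p \<in> U" "q \<in> W" "ends f = {p, q}" using H_edge f(1) by blast
  then obtain z where z: "ends f = {y, z}" "y \<in> U \<longleftrightarrow> z \<in> W" using f(2) U_W_partition by auto
  have "z \<noteq> y" using z(2) U_W_partition pq f(2) by auto
  then have "z \<in> ends e \<union> B"
    using component_exit[OF y f(1) _ z(1)] z(1) by (cases "f = e") auto
  then show ?thesis using z by blast
qed

text \<open>A vertex y forming a component of G - e - B is adjacent only to u or w and to vertices of B
  on the other side; if that side of B is a single vertex, two vertices separate y.\<close>

lemma isolated_W_empty_if_one_in_B_U:
  assumes p: "B \<inter> U = {p}"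
  shows "isolated W = {}"
proof (rule ccontr)
  assume "isolated W \<noteq> {}"
  then obtain y where y: "y \<in> W" "{y} \<in> comps" by blast
  have "y \<in> V" "y \<notin> {p, u}" "{p, u} \<subseteq> V"
    using comp_subset[OF y(2)] y(1) p uw U_W_partition B_subset by auto
  then obtain f where f: "f \<in> E" "y \<in> ends f" "\<not> ends f \<subseteq> {y, p, u}"
    using three_connected_vertex_escapes[OF G_three_connected, of y "{p, u}"] by (cases "p = u") auto
  then show False
    using singleton_component_edge[OF y(2) f(1,2)] edge_ends[OF f(1)] y(1) p uw U_W_partition by auto
qed

lemma isolated_U_empty_if_one_in_B_W:
  assumes q: "B \<inter> W = {q}"
  shows "isolated U = {}"
proof (rule ccontr)
  assume "isolated U \<noteq> {}"
  then obtain y where y: "y \<in> U" "{y} \<in> comps" by blast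
  have "y \<in> V" "y \<notin> {q, w}" "{q, w} \<subseteq> V"
    using comp_subset[OF y(2)] y(1) q uw U_W_partition B_subset by auto
  then obtain f where f: "f \<in> E" "y \<in> ends f" "\<not> ends f \<subseteq> {y, q, w}"
    using three_connected_vertex_escapes[OF G_three_connected, of y "{q, w}"] by (cases "q = w") auto
  then show False
    using singleton_component_edge[OF y(2) f(1,2)] edge_ends[OF f(1)] y(1) q uw U_W_partition by auto
qed

lemma edge_leaving_C1_from_U:
  assumes q: "B \<inter> W = {q}" and f: "f \<in> E" "f \<noteq> e" "f \<noteq> e2" "ends f = {p, r}"
    and p: "p \<in> C1" "p \<in> U" and r: "r \<notin> C1"
  shows "r = q"
proof -
  have "f \<noteq> e1" using p e1C2 C1_C2_disjoint f(4) by auto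
  then obtain p' q' where "p' \<in> U" "q' \<in> W" "ends f = {p', q'}" using H_edge f by blast
  then have "r \<in> W" using f(4) p r U_W_partition by auto
  moreover have "r \<in> B" by (rule component_exit[OF C1(1) f(1,2,4) p(1) r])
  ultimately show ?thesis using q by blast
qed

text \<open>If B has a single vertex q in W, a matching edge leaving K from a vertex of U is e or the
  matching edge at q, so at most two terms of cut_surplus are negative.\<close>

lemma cut_surplus_inside_C1_lower_bound:
  assumes q: "B \<inter> W = {q}" and Q: "Q \<subseteq> E" "e2 \<notin> Q" "\<exists>!f. f \<in> Q \<and> q \<in> ends f"
    and K: "K \<subseteq> C1" "\<forall>f\<in>Q. ends f \<inter> (C1 - K) = {}"
  shows "cut_surplus Q K \<ge> -2"
proof -
  let ?N = "insert e {f \<in> Q. q \<in> ends f}"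
  obtain g where "\<forall>f. f \<in> Q \<and> q \<in> ends f \<longrightarrow> f = g" using Q(3) by (rule ex1E)
  then have "{f \<in> Q. q \<in> ends f} \<subseteq> {g}" by blast
  then have "card ?N \<le> 2" using card_insert_le_m1[of 2 "{f \<in> Q. q \<in> ends f}" e] card_mono[of "{g}"]
    by fastforce
  moreover have "cut_surplus Q K \<ge> - int (card ?N)"
    unfolding cut_surplus_def
  proof (rule sum_ge_minus_card)
    show "finite (cut_edges Q ends K)" using Q(1) by (rule finite_cut_edges)
    show "finite ?N" using Q(1) finite_E by (auto intro: finite_subset)
    show "\<forall>f\<in>cut_edges Q ends K. (\<Sum>v\<in>ends f \<inter> K. side_sign v) \<ge> 0
        \<or> ((\<Sum>v\<in>ends f \<inter> K. side_sign v) \<ge> -1 \<and> f \<in> ?N)"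
    proof
      fix f assume f: "f \<in> cut_edges Q ends K"
      have fQ: "f \<in> Q" "f \<in> E" using f Q(1) by (auto simp: cut_edges_def)
      obtain p r where pr: "ends f = {p, r}" "p \<in> K" "r \<notin> K"
        using cut_edge_ends[OF f edge_card[OF fQ(2)]] by blast
      have "r \<notin> C1" using K(2) fQ(1) pr by blast
      have contrib: "(\<Sum>v\<in>ends f \<inter> K. side_sign v) = side_sign p"
        using pr by (auto simp: insert_Diff_if)
      show "(\<Sum>v\<in>ends f \<inter> K. side_sign v) \<ge> 0 \<or> ((\<Sum>v\<in>ends f \<inter> K. side_sign v) \<ge> -1 \<and> f \<in> ?N)"
      proof (cases "p \<in> W \<or> f = e")
        case True
        then show ?thesis using contrib by (auto simp: side_sign_def)
      next
        case False
        then have "p \<in> U" using pr(2) K(1) comp_subset[OF C1(1)] U_W_partition by auto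
        then have "r = q"
          using edge_leaving_C1_from_U[OF q fQ(2) _ _ pr(1) _ _ \<open>r \<notin> C1\<close>] False pr(2) K(1) Q(2) fQ(1)
          by auto
        then show ?thesis using contrib fQ(1) pr(1) by (auto simp: side_sign_def)
      qed
    qed
  qed
  ultimately show ?thesis by linarith
qed

text \<open>Deleting the two ends of e2, which lie in C1 \<inter> W, leaves a part of C1 of surplus -3
  if u \<in> C1; a perfect matching of G minus these ends cannot account for that.\<close>

lemma u_not_in_C1_if_one_in_B_W:
  assumes q: "B \<inter> W = {q}"
  shows "u \<notin> C1"
proof
  assume u: "u \<in> C1"
  then have "surplus C1 = -1" using surplus_C1_in_range by (simp add: surplus_range_def)
  obtain a b where ab: "ends e2 = {a, b}" "a \<noteq> b" using edge_card[OF e12(2)] by (auto simp: card_2_iff)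
  have ab_C1: "a \<in> C1" "b \<in> C1" "a \<in> W" "b \<in> W" using ab e2C1 e2W by auto
  then obtain Q where Q: "perfect_matching (V - {a, b}) (vdel E ends {a, b}) ends Q"
    using G_bicritical ab(2) comp_subset[OF C1(1)] by blast
  have QE: "Q \<subseteq> E" and avoid: "\<forall>f\<in>Q. ends f \<inter> {a, b} = {}"
    and cover: "\<forall>v\<in>V - {a, b}. \<exists>!f. f \<in> Q \<and> v \<in> ends f"
    using Q by (auto simp: perfect_matching_def vdel_def)
  have "e2 \<notin> Q" using avoid ab by auto
  define K where "K = C1 - {a, b}"
  have K: "K \<subseteq> V - {a, b}" "K \<subseteq> C1" using comp_subset[OF C1(1)] by (auto simp: K_def)
  have "surplus C1 = surplus K + surplus {a, b}"
    using finite_comp[OF C1(1)] ab_C1 by (simp add: K_def surplus_def sum.subset_diff)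
  then have "surplus K = -3"
    using \<open>surplus C1 = -1\<close> ab ab_C1 by (simp add: surplus_def side_sign_def)
  moreover have "surplus K = cut_surplus Q K"
  proof -
    have cover_K: "\<forall>v\<in>K. \<exists>!f. f \<in> Q \<and> v \<in> ends f"
    proof
      fix v assume "v \<in> K"
      then have "v \<in> V - {a, b}" using K by blast
      with cover show "\<exists>!f. f \<in> Q \<and> v \<in> ends f" by (rule bspec)
    qed
    have "K \<subseteq> V" using K(1) by blast
    moreover have "\<not> ends e1 \<subseteq> K" using e1_not_in_C1 K(2) by blast
    ultimately show ?thesis using surplus_decomposition[OF QE _ cover_K] \<open>e2 \<notin> Q\<close> by simp
  qed
  moreover have "cut_surplus Q K \<ge> -2"
  proof (rule cut_surplus_inside_C1_lower_bound[OF q QE \<open>e2 \<notin> Q\<close> _ K(2)])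
    have "q \<in> V - {a, b}" using q B_subset ab_C1 comp_subset[OF C1(1)] by auto
    with cover show "\<exists>!f. f \<in> Q \<and> q \<in> ends f" by (rule bspec)
    show "\<forall>f\<in>Q. ends f \<inter> (C1 - K) = {}" using avoid by (auto simp: K_def)
  qed
  ultimately show False by linarith
qed

lemma B_U_nonempty: "B \<inter> U \<noteq> {}" and B_W_nonempty: "B \<inter> W \<noteq> {}"
  using es_ends_in_B by auto

lemma u_w_in_V_B: "u \<in> V - B" "w \<in> V - B"
  using uw u_w_outside_B U_W_partition by auto

lemma u_not_in_C1: "u \<notin> C1"
proof
  assume u: "u \<in> C1"
  have "w \<notin> C1" by (rule u_w_separated[OF C1(1) u])
  obtain p where p: "B \<inter> U = {p}"
    using singleton_or_two_elements[OF B_U_nonempty] surplus_C1_if_two_in_B_U u by blast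
  have "w \<in> C2"
    using component_cases[OF u_w_in_V_B(2)] \<open>w \<notin> C1\<close> isolated_W_empty_if_one_in_B_U[OF p] uw(2)
    by blast
  then obtain q where q: "B \<inter> W = {q}"
    using singleton_or_two_elements[OF B_W_nonempty] surplus_C2_if_two_in_B_W by blast
  show False using u_not_in_C1_if_one_in_B_W[OF q] u by blast
qed

lemma w_not_in_C2: "w \<notin> C2"
proof
  assume w: "w \<in> C2"
  have "u \<notin> C2" using u_w_separated[OF C2(1)] w by blast
  obtain q where q: "B \<inter> W = {q}"
    using singleton_or_two_elements[OF B_W_nonempty] surplus_C2_if_two_in_B_W w by blast
  have "u \<in> C1"
    using component_cases[OF u_w_in_V_B(1)] \<open>u \<notin> C2\<close> isolated_U_empty_if_one_in_B_W[OF q] uw(1)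
    by blast
  then show False using u_not_in_C1 by blast
qed

lemma u_location: "u \<in> isolated U \<or> (isolated U = {} \<and> u \<in> C2)"
proof (cases "u \<in> C2")
  case True
  then obtain q where q: "B \<inter> W = {q}"
    using singleton_or_two_elements[OF B_W_nonempty] surplus_C2_if_two_in_B_W by blast
  then show ?thesis using True isolated_U_empty_if_one_in_B_W[OF q] by blast
next
  case False
  then show ?thesis using component_cases[OF u_w_in_V_B(1)] u_not_in_C1 uw(1) by blast
qed

lemma w_location: "w \<in> isolated W \<or> (isolated W = {} \<and> w \<in> C1)"
proof (cases "w \<in> C1")
  case True
  then obtain p where p: "B \<inter> U = {p}"
    using singleton_or_two_elements[OF B_U_nonempty] surplus_C1_if_two_in_B_U by blast
  then show ?thesis using True isolated_W_empty_if_one_in_B_U[OF p] by blast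
next
  case False
  then show ?thesis using component_cases[OF u_w_in_V_B(2)] w_not_in_C2 uw(2) by blast
qed

lemma surplus_C1_eq: "surplus C1 = 1"
proof (cases "w \<in> C1")
  case True
  then show ?thesis using surplus_C1_in_range u_not_in_C1 by (simp add: surplus_range_def)
next
  case False
  then have "isolated W \<noteq> {}" using w_location by blast
  then obtain x y where "x \<in> B \<inter> U" "y \<in> B \<inter> U" "x \<noteq> y"
    using singleton_or_two_elements[OF B_U_nonempty] isolated_W_empty_if_one_in_B_U by blast
  then show ?thesis using surplus_C1_if_two_in_B_U by blast
qed

lemma surplus_C2_eq: "surplus C2 = -1"
proof (cases "u \<in> C2")
  case True
  then show ?thesis using surplus_C2_in_range by (simp add: surplus_range_def)
next
  case False
  then have "isolated U \<noteq> {}" using u_location by blast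
  then obtain x y where "x \<in> B \<inter> W" "y \<in> B \<inter> W" "x \<noteq> y"
    using singleton_or_two_elements[OF B_W_nonempty] isolated_U_empty_if_one_in_B_W by blast
  then show ?thesis using surplus_C2_if_two_in_B_W by blast
qed

section \<open>Counting\<close>

lemma isolated_subset: "isolated X \<subseteq> V - B"
  using comp_subset by blast

lemma odd_components:
  "{K \<in> comps. odd (card K)} = (\<lambda>x. {x}) ` (isolated U \<union> isolated W) \<union> {C1, C2}"
proof
  show "{K \<in> comps. odd (card K)} \<subseteq> (\<lambda>x. {x}) ` (isolated U \<union> isolated W) \<union> {C1, C2}"
  proof
    fix K assume "K \<in> {K \<in> comps. odd (card K)}"
    then have K: "K \<in> comps" "odd (card K)" by simp_all
    show "K \<in> (\<lambda>x. {x}) ` (isolated U \<union> isolated W) \<union> {C1, C2}"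
    proof (cases "card K > 1")
      case True
      then have "K = C1 \<or> K = C2" using omega2 K(1) by blast
      then show ?thesis by blast
    next
      case False
      then have "card K = 1" using K(2) by (cases "card K") auto
      then obtain x where x: "K = {x}" by (rule card_1_singletonE)
      then have "x \<in> U \<union> W" using comp_subset[OF K(1)] U_W_partition by blast
      then have "x \<in> isolated U \<union> isolated W" using x K(1) by auto
      then show ?thesis using x by simp
    qed
  qed
  have "odd (card C1)"
    by (rule odd_card_if_odd_surplus) (use comp_subset[OF C1(1)] surplus_C1_eq in auto)
  moreover have "odd (card C2)"
    by (rule odd_card_if_odd_surplus) (use comp_subset[OF C2(1)] surplus_C2_eq in auto)
  ultimately show "(\<lambda>x. {x}) ` (isolated U \<union> isolated W) \<union> {C1, C2} \<subseteq> {K \<in> comps. odd (card K)}"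
    using C1(1) C2(1) by (intro Un_least image_subsetI) auto
qed

lemma card_B_eq: "card B = card (isolated U) + card (isolated W) + 2"
proof -
  have finite: "finite (isolated U \<union> isolated W)"
    using isolated_subset finite_V by (meson finite_Diff finite_Un finite_subset)
  have "card B = card {K \<in> comps. odd (card K)}"
    using B_bar by (simp add: barrier_def)
  also have "\<dots> = card ((\<lambda>x. {x}) ` (isolated U \<union> isolated W)) + card {C1, C2}"
    unfolding odd_components using finite singleton_not_in_C12
    by (intro card_Un_disjoint) auto
  also have "card ((\<lambda>x. {x}) ` (isolated U \<union> isolated W)) = card (isolated U \<union> isolated W)"
    by (rule card_image) (simp add: inj_on_def)
  also have "\<dots> = card (isolated U) + card (isolated W)"
    using finite U_W_partition by (intro card_Un_disjoint) auto
  finally show ?thesis using C12 by simp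
qed

lemma surplus_union_V:
  "X \<subseteq> V \<Longrightarrow> Y \<subseteq> V \<Longrightarrow> X \<inter> Y = {} \<Longrightarrow> surplus (X \<union> Y) = surplus X + surplus Y"
  using finite_V by (intro surplus_union) (auto intro: finite_subset)

lemma surplus_partition:
  "surplus V = surplus B + surplus (isolated U) + surplus (isolated W) + surplus C1 + surplus C2"
proof -
  let ?I = "isolated U \<union> isolated W"
  have sub: "?I \<subseteq> V - B" "C1 \<subseteq> V - B" "C2 \<subseteq> V - B"
    using isolated_subset comp_subset[OF C1(1)] comp_subset[OF C2(1)] by auto
  have "V = B \<union> ((?I \<union> C1) \<union> C2)"
    using component_cases B_subset sub U_W_partition by blast
  then have "surplus V = surplus (B \<union> ((?I \<union> C1) \<union> C2))" by (rule arg_cong)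
  also have "\<dots> = surplus B + surplus ((?I \<union> C1) \<union> C2)"
    using sub B_subset by (intro surplus_union_V) auto
  also have "surplus ((?I \<union> C1) \<union> C2) = surplus (?I \<union> C1) + surplus C2"
    using sub singleton_not_in_C12 C1_C2_disjoint by (intro surplus_union_V) auto
  also have "surplus (?I \<union> C1) = surplus ?I + surplus C1"
    using sub singleton_not_in_C12 by (intro surplus_union_V) auto
  also have "surplus ?I = surplus (isolated U) + surplus (isolated W)"
    using sub U_W_partition by (intro surplus_union_V) auto
  finally show ?thesis by simp
qed

lemma card_identities:
  "card (B \<inter> U) = card (isolated W) + 1 \<and> card (C2 \<inter> U) = card (C2 \<inter> W) + 1
   \<and> card (B \<inter> W) = card (isolated U) + 1 \<and> card (C1 \<inter> W) = card (C1 \<inter> U) + 1"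
proof -
  have C: "C1 \<subseteq> V" "C2 \<subseteq> V" using comp_subset C1(1) C2(1) by auto
  have sub: "isolated U \<subseteq> V" "isolated W \<subseteq> V" using isolated_subset by auto
  have "isolated U \<inter> W = {}" "isolated U \<inter> U = isolated U" "isolated W \<inter> W = isolated W"
    "isolated W \<inter> U = {}" using U_W_partition by auto
  then have iso: "surplus (isolated U) = - int (card (isolated U))" "surplus (isolated W) = int (card (isolated W))"
    using surplus_eq_card[OF sub(1)] surplus_eq_card[OF sub(2)] by simp_all
  have "card B = card (B \<inter> U) + card (B \<inter> W)"
    using B_subset U_W_partition finite_V by (subst card_Un_disjoint[symmetric]) (auto intro: arg_cong[where f = card] finite_subset)
  then show ?thesis
    using surplus_partition surplus_V surplus_C1_eq surplus_C2_eq iso card_B_eq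
      surplus_eq_card[OF B_subset] surplus_eq_card[OF C(1)] surplus_eq_card[OF C(2)]
    by linarith
qed

lemma no_component_meets_both:
  assumes K: "K \<in> comps" "x \<in> K" "y \<in> K"
    and x: "x \<in> isolated U \<union> (C2 \<inter> U)" and y: "y \<in> isolated W \<union> (C1 \<inter> W)"
  shows False
proof (cases "x \<in> C2")
  case True
  then have "K = C2" using components_disjoint[OF K(1) C2(1) K(2)] by simp
  then show False using y K(3) singleton_not_in_C12 C1_C2_disjoint by blast
next
  case False
  then have "{x} \<in> comps" "x \<in> U" using x by auto
  then have "K = {x}" using components_disjoint[OF K(1) _ K(2)] by simp
  then show False using y K(3) \<open>x \<in> U\<close> U_W_partition by auto
qed

lemma edges_between_eq_e:
  assumes X: "X \<subseteq> isolated U \<union> (C2 \<inter> U)" and Y: "Y \<subseteq> isolated W \<union> (C1 \<inter> W)"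
    and "u \<in> X" "w \<in> Y"
  shows "edges_between E ends X Y = {e}"
proof
  show "{e} \<subseteq> edges_between E ends X Y" using eE uw assms(3,4) by (auto simp: edges_between_def)
  show "edges_between E ends X Y \<subseteq> {e}"
  proof
    fix f assume "f \<in> edges_between E ends X Y"
    then obtain x y where f: "f \<in> E" "ends f = {x, y}" and xy: "x \<in> X" "y \<in> Y"
      by (auto simp: edges_between_def)
    have "X \<subseteq> V - B" "Y \<subseteq> V - B"
      using X Y isolated_subset comp_subset[OF C1(1)] comp_subset[OF C2(1)] by blast+
    then have "x \<in> V - B" "y \<notin> B" using xy by auto
    then obtain K where K: "K \<in> comps" "x \<in> K"
      using in_component[of x "V - B" "vdel (E - {e}) ends B" ends] by blast
    show "f \<in> {e}"
    proof (rule ccontr)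
      assume "f \<notin> {e}"
      then have "y \<in> K" using component_exit[OF K(1) f(1) _ f(2) K(2)] \<open>y \<notin> B\<close> by blast
      then show False using no_component_meets_both[OF K _ _] xy X Y by blast
    qed
  qed
qed

lemma edges_between_sides:
  "(isolated U \<noteq> {} \<longrightarrow>
      (isolated W \<noteq> {} \<longrightarrow> edges_between E ends (isolated U) (isolated W) = {e})
    \<and> (isolated W = {} \<longrightarrow> edges_between E ends (isolated U) (C1 \<inter> W) = {e}))
   \<and> (isolated U = {} \<longrightarrow>
      (isolated W \<noteq> {} \<longrightarrow> edges_between E ends (C2 \<inter> U) (isolated W) = {e})
    \<and> (isolated W = {} \<longrightarrow> edges_between E ends (C2 \<inter> U) (C1 \<inter> W) = {e}))"
  by (intro conjI impI; rule edges_between_eq_e) (use u_location w_location uw in auto)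

end

theorem mainTheorem10:
  fixes V :: "'v set" and E :: "'e set" and ends :: "'e \<Rightarrow> 'v set"
    and e1 e2 e es :: 'e and U W B C1 C2 :: "'v set" and u w :: 'v
  assumes brick: "brick V E ends"
    and e12: "e1 \<in> E" "e2 \<in> E" "e1 \<noteq> e2"
    and H_mc: "matching_covered V (E - {e1, e2}) ends"
    and H_bip: "bipartite_with V (E - {e1, e2}) ends U W"
    and e1U: "ends e1 \<subseteq> U" and e2W: "ends e2 \<subseteq> W"
    and eE: "e \<in> E - {e1, e2}"
    and e_nonrem_G: "\<not> removable V E ends e"
    and e_nonrem_H: "\<not> removable V (E - {e1, e2}) ends e"
    and uw: "u \<in> U" "w \<in> W" "ends e = {u, w}"
    and es: "es \<in> E - {e1, e2, e}"
    and es_G: "\<not> admissible V (E - {e}) ends es"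
    and es_H: "\<not> admissible V (E - {e1, e2, e}) ends es"
    and B_bar: "barrier V (E - {e}) ends B" and esB: "ends es \<subseteq> B"
    and B_max: "\<forall>B'. barrier V (E - {e}) ends B' \<and> ends es \<subseteq> B' \<and> B \<subseteq> B' \<longrightarrow> B' = B"
    and C1: "C1 \<in> components (V - B) (vdel (E - {e}) ends B) ends" "card C1 > 1"
    and C2: "C2 \<in> components (V - B) (vdel (E - {e}) ends B) ends" "card C2 > 1"
    and C12: "C1 \<noteq> C2"
    and omega2: "\<forall>C \<in> components (V - B) (vdel (E - {e}) ends B) ends. card C > 1 \<longrightarrow> C = C1 \<or> C = C2"
    and e2C1: "ends e2 \<subseteq> C1" and e1C2: "ends e1 \<subseteq> C2"
  defines "U1 \<equiv> B \<inter> U" and "W2 \<equiv> B \<inter> W"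
    and "U2 \<equiv> {x \<in> U. {x} \<in> components (V - B) (vdel (E - {e}) ends B) ends}"
    and "W1 \<equiv> {x \<in> W. {x} \<in> components (V - B) (vdel (E - {e}) ends B) ends}"
    and "U3 \<equiv> C1 \<inter> U" and "W3 \<equiv> C1 \<inter> W"
    and "U4 \<equiv> C2 \<inter> U" and "W4 \<equiv> C2 \<inter> W"
  shows "(card U1 = card W1 + 1 \<and> card U4 = card W4 + 1 \<and> card W2 = card U2 + 1
            \<and> card W3 = card U3 + 1)
       \<and> (U2 \<noteq> {} \<longrightarrow>
            (W1 \<noteq> {} \<longrightarrow> edges_between E ends U2 W1 = {e})
          \<and> (W1 = {} \<longrightarrow> edges_between E ends U2 W3 = {e}))
       \<and> (U2 = {} \<longrightarrow>
            (W1 \<noteq> {} \<longrightarrow> edges_between E ends U4 W1 = {e})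
          \<and> (W1 = {} \<longrightarrow> edges_between E ends U4 W3 = {e}))"
proof -
  interpret omega_two_decomposition V E ends e1 e2 e es U W B C1 C2 u w
    using brick e12 H_mc H_bip e1U e2W eE uw es B_bar esB C1 C2 C12 omega2 e2C1 e1C2
    by unfold_locales
  have "U2 = isolated U" "W1 = isolated W" by (simp_all add: U2_def W1_def)
  then show ?thesis
    unfolding U1_def W2_def U3_def W3_def U4_def W4_def
    using card_identities edges_between_sides by simp
qed

end
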